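(* Let $G_0$ be a fixed $n\times l$ binary matrix, $G_1$ a fixed $n\times k$ binary matrix, $\mathbf m\in\{0,1\}^k$ fixed, $t_0=\lfloor (d_0-1)/2\rfloor$, and $1\le u\le n$. Then $$P(E=0\mid U=u)\;\begin{cases}=0, & u<d_0,\\[2pt] =\dfrac12\cdot\dfrac{\sum_{w=d_0}^{u}B_{0,w}\binom{n-w}{u-w}}{\binom nu}, & d_0\le u\le d_0+t_0,\\[6pt] \le \min\left\{\dfrac{\sum_{w=d_0}^{u}B_{0,w}\binom{n-w}{u-w}}{\binom nu},1\right\}, & u>d_0+t_0.\end{cases}$$
   Context: All arithmetic is over $\mathrm{GF}(2)$. $\mathcal C_0^{\perp}=\{\mathbf x\in\{0,1\}^n: G_0^T\mathbf x=\mathbf 0\}$; $B_{0,w}$ is the number of vectors of Hamming weight $w$ in $\mathcal C_0^\perp$, and $d_0$ is the minimum Hamming weight of a nonzero vector of $\mathcal C_0^\perp$. Defect model: each of the $n$ memory cells is independently defective with probability $\beta\in(0,1)$; a defective cell is stuck at $0$ or at $1$, each with probability $1/2$, independently. Let $\mathcal U$ be the set of defect positions, $U=|\mathcal U|$, $\mathbf s^{\mathcal U}$ the vector of stuck-at values; conditionally on $U=u$, $\mathcal U$ is a uniform random $u$-subset and $\mathbf s^{\mathcal U}$ is uniform on $\{0,1\}^u$. For a matrix $M$ (resp. vector $\mathbf v$) with rows indexed by $\{1,\dots,n\}$, $M^{\mathcal U}$ (resp. $\mathbf v^{\mathcal U}$) denotes the rows indexed by $\mathcal U$. Encoding: with $\mathbf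 b^{\mathcal U}=(G_1\mathbf m)^{\mathcal U}+\mathbf s^{\mathcal U}$, look for $\mathbf d\in\{0,1\}^l$ with $G_0^{\mathcal U}\mathbf d=\mathbf b^{\mathcal U}$; $E=1$ if such $\mathbf d$ exists and $E=0$ (encoding failure) otherwise. *)

theory Defs
  imports "HOL-Probability.Probability" "HOL-Library.Z2"
begin

definition bvecs :: "nat \<Rightarrow> (nat \<Rightarrow> bit) set" where
  "bvecs n = {..<n} \<rightarrow>\<^sub>E (UNIV :: bit set)"

definition dual_code :: "nat \<Rightarrow> nat \<Rightarrow> (nat \<Rightarrow> nat \<Rightarrow> bit) \<Rightarrow> (nat \<Rightarrow> bit) set" where
  "dual_code n l G0 = {x \<in> bvecs n. \<forall>j<l. (\<Sum>i<n. G0 i j * x i) = 0}"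

definition hweight :: "nat \<Rightarrow> (nat \<Rightarrow> bit) \<Rightarrow> nat" where
  "hweight n x = card {i. i < n \<and> x i \<noteq> 0}"

definition Bw :: "nat \<Rightarrow> nat \<Rightarrow> (nat \<Rightarrow> nat \<Rightarrow> bit) \<Rightarrow> nat \<Rightarrow> nat" where
  "Bw n l G0 w = card {x \<in> dual_code n l G0. hweight n x = w}"

definition dmin :: "nat \<Rightarrow> nat \<Rightarrow> (nat \<Rightarrow> nat \<Rightarrow> bit) \<Rightarrow> nat" where
  "dmin n l G0 = Min {hweight n x | x. x \<in> dual_code n l G0 \<and> (\<exists>i<n. x i \<noteq> 0)}"

text \<open>Conditional sample space given U = u: a defect set S (a u-subset of {0..<n})
together with stuck-at values s on S; uniformly distributed.\<close>
definition defect_space :: "nat \<Rightarrow> nat \<Rightarrow> (nat set \<times> (nat \<Rightarrow> bit)) set" where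
  "defect_space n u = {(S, s). S \<subseteq> {..<n} \<and> card S = u \<and> s \<in> S \<rightarrow>\<^sub>E (UNIV :: bit set)}"

definition encodable ::
  "nat \<Rightarrow> nat \<Rightarrow> (nat \<Rightarrow> nat \<Rightarrow> bit) \<Rightarrow> (nat \<Rightarrow> nat \<Rightarrow> bit) \<Rightarrow> (nat \<Rightarrow> bit)
     \<Rightarrow> nat set \<Rightarrow> (nat \<Rightarrow> bit) \<Rightarrow> bool" where
  "encodable l k G0 G1 m S s =
     (\<exists>d \<in> bvecs l. \<forall>i\<in>S. (\<Sum>j<l. G0 i j * d j) = (\<Sum>j<k. G1 i j * m j) + s i)"

definition fail_prob ::
  "nat \<Rightarrow> nat \<Rightarrow> nat \<Rightarrow> (nat \<Rightarrow> nat \<Rightarrow> bit) \<Rightarrow> (nat \<Rightarrow> nat \<Rightarrow> bit) \<Rightarrow> (nat \<Rightarrow> bit)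
     \<Rightarrow> nat \<Rightarrow> real" where
  "fail_prob n l k G0 G1 m u =
     measure_pmf.prob (pmf_of_set (defect_space n u))
       {(S, s). \<not> encodable l k G0 G1 m S s}"

end

theory Submission
  imports Defs
begin

text \<open>Fix the defect set \<open>U\<close>. The encodable stuck-at patterns form a coset of the code
  \<open>V = {G\<^sub>0\<^sup>U d}\<close>, so a uniform pattern fails with probability \<open>1 - |V| / 2^|U|\<close>.
  The annihilator of \<open>V\<close> in \<open>GF(2)^U\<close> is the set \<open>D\<close> of dual codewords supported in \<open>U\<close>, and
  \<open>|V| |D| = 2^|U|\<close>; hence the failure probability given \<open>U\<close> is \<open>1 - 1/|D|\<close>.
  If \<open>|U| < d\<^sub>0\<close> then \<open>D = {0}\<close>. If \<open>|U| \<le> d\<^sub>0 + t\<^sub>0\<close>, two distinct nonzero words of \<open>D\<close> with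
  supports \<open>A, B\<close> would, together with their sum, give three nonzero dual codewords of total
  weight \<open>|A| + |B| + |A - B| + |B - A| = 2 |A \<union> B| \<le> 2 |U| < 3 d\<^sub>0\<close>; so \<open>|D| \<le> 2\<close> and
  \<open>1 - 1/|D| = (|D| - 1)/2\<close>. In general \<open>1 - 1/|D| \<le> |D| - 1\<close>. Averaging over \<open>U\<close>, the sum of
  \<open>|D| - 1\<close> counts the pairs \<open>(x, U)\<close> of a nonzero dual codeword \<open>x\<close> and a \<open>u\<close>-set
  \<open>U \<supseteq> supp x\<close>, which is \<open>\<Sum>\<^sub>w B\<^sub>0\<^sub>,\<^sub>w (n - w choose u - w)\<close>.\<close>

lemma UNIV_bit: "(UNIV :: bit set) = {0, 1}"
  by (auto intro: bit.exhaust)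

lemma finite_UNIV_bit [simp]: "finite (UNIV :: bit set)"
  by (simp add: UNIV_bit)

lemma card_UNIV_bit: "card (UNIV :: bit set) = 2"
  by (simp add: UNIV_bit)

lemma card_eq_double_if_flipping_involution:
  assumes "finite A" and "\<And>a. a \<in> A \<Longrightarrow> g a \<in> A" and "\<And>a. a \<in> A \<Longrightarrow> g (g a) = a"
    and "\<And>a. a \<in> A \<Longrightarrow> f (g a) = f a + (1::bit)"
  shows "card A = 2 * card {a\<in>A. f a = 0}"
proof -
  have "card A = card ({a\<in>A. f a = 0} \<union> {a\<in>A. f a = 1})"
    by (rule arg_cong[where f = card]) auto
  also have "\<dots> = card {a\<in>A. f a = 0} + card {a\<in>A. f a = 1}"
    using assms(1) by (intro card_Un_disjoint) auto
  also have "card {a\<in>A. f a = 1} = card {a\<in>A. f a = 0}"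
    by (rule bij_betw_same_card[symmetric], rule bij_betw_byWitness[where f' = g]) (use assms in auto)
  finally show ?thesis
    by simp
qed

definition vec_add :: "'i set \<Rightarrow> ('i \<Rightarrow> bit) \<Rightarrow> ('i \<Rightarrow> bit) \<Rightarrow> 'i \<Rightarrow> bit" where
  "vec_add S a b = restrict (\<lambda>i. a i + b i) S"

definition inner_on :: "'i set \<Rightarrow> ('i \<Rightarrow> bit) \<Rightarrow> ('i \<Rightarrow> bit) \<Rightarrow> bit" where
  "inner_on S y v = (\<Sum>i\<in>S. y i * v i)"

lemma vec_add_PiE: "vec_add S a b \<in> S \<rightarrow>\<^sub>E UNIV"
  by (simp add: vec_add_def)

lemma vec_add_vec_add_cancel: "a \<in> S \<rightarrow>\<^sub>E UNIV \<Longrightarrow> vec_add S v (vec_add S v a) = a"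
  by (auto simp: vec_add_def fun_eq_iff add.assoc[symmetric] PiE_def extensional_def)

lemma inner_on_vec_add_right: "inner_on S y (vec_add S a b) = inner_on S y a + inner_on S y b"
  unfolding inner_on_def vec_add_def
  \<comment> \<open>the default simp rules of \<open>Z2\<close> turn \<open>+\<close> and \<open>*\<close> into XOR/AND, which blocks ring reasoning\<close>
  by (simp add: distrib_left sum.distrib del: add_bit_eq_xor mult_bit_eq_and)

lemma inner_on_vec_add_left: "inner_on S (vec_add S a b) y = inner_on S a y + inner_on S b y"
  unfolding inner_on_def vec_add_def
  by (simp add: distrib_right sum.distrib del: add_bit_eq_xor mult_bit_eq_and)

lemma inner_on_unit_vector:
  assumes "finite S" "i \<in> S"
  shows "inner_on S (restrict (\<lambda>j. if j = i then 1 else 0) S) v = v i"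
proof -
  have "inner_on S (restrict (\<lambda>j. if j = i then 1 else 0) S) v = (\<Sum>j\<in>S. if j = i then v j else 0)"
    unfolding inner_on_def by (rule sum.cong) auto
  also have "\<dots> = v i"
    using assms by simp
  finally show ?thesis .
qed

lemma double_card_orthogonal_in_subgroup:
  assumes "finite V" and V: "V \<subseteq> S \<rightarrow>\<^sub>E UNIV"
    and add_closed: "\<And>a b. a \<in> V \<Longrightarrow> b \<in> V \<Longrightarrow> vec_add S a b \<in> V"
  shows "2 * card {v\<in>V. inner_on S y v = 0}
           = card V + (if \<forall>v\<in>V. inner_on S y v = 0 then card V else 0)"
proof (cases "\<forall>v\<in>V. inner_on S y v = 0")
  case True
  then have "{v\<in>V. inner_on S y v = 0} = V"
    by auto
  with True show ?thesis
    by simp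
next
  case False
  then obtain v0 where "v0 \<in> V" "inner_on S y v0 = 1"
    by auto
  then have "card V = 2 * card {v\<in>V. inner_on S y v = 0}"
    by (intro card_eq_double_if_flipping_involution[where g = "vec_add S v0"])
      (use assms in \<open>auto simp: vec_add_vec_add_cancel subsetD inner_on_vec_add_right add.commute\<close>)
  then show ?thesis
    by (simp only: if_not_P[OF False] add_0_right)
qed

lemma double_card_orthogonal:
  assumes "finite S" "v \<in> S \<rightarrow>\<^sub>E UNIV"
  shows "2 * card {y \<in> S \<rightarrow>\<^sub>E UNIV. inner_on S y v = 0}
           = card (S \<rightarrow>\<^sub>E (UNIV :: bit set)) + (if v = restrict (\<lambda>_. 0) S then card (S \<rightarrow>\<^sub>E (UNIV :: bit set)) else 0)"
proof (cases "v = restrict (\<lambda>_. 0) S")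
  case True
  then show ?thesis
    by (simp add: inner_on_def)
next
  case False
  with assms(2) obtain i where "i \<in> S" "v i = 1"
    by (auto simp: fun_eq_iff PiE_def extensional_def split: if_splits)
  define e where "e = restrict (\<lambda>j. if j = i then 1 else 0 :: bit) S"
  have "inner_on S e v = 1"
    using assms(1) \<open>i \<in> S\<close> \<open>v i = 1\<close> by (simp add: e_def inner_on_unit_vector)
  then have "card (S \<rightarrow>\<^sub>E (UNIV :: bit set)) = 2 * card {y \<in> S \<rightarrow>\<^sub>E UNIV. inner_on S y v = 0}"
    by (intro card_eq_double_if_flipping_involution[where g = "vec_add S e"])
      (use assms(1) in \<open>auto simp: finite_PiE vec_add_PiE vec_add_vec_add_cancel inner_on_vec_add_left add.commute\<close>)
  with False show ?thesis
    by simp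
qed

text \<open>Double counting of the orthogonal pairs \<open>(y, v)\<close>.\<close>

lemma card_mult_card_orthogonal:
  assumes fin: "finite S" and V: "V \<subseteq> S \<rightarrow>\<^sub>E UNIV"
    and add_closed: "\<And>a b. a \<in> V \<Longrightarrow> b \<in> V \<Longrightarrow> vec_add S a b \<in> V"
    and zero: "restrict (\<lambda>_. 0) S \<in> V"
  shows "card V * card {y \<in> S \<rightarrow>\<^sub>E UNIV. \<forall>v\<in>V. inner_on S y v = 0} = 2 ^ card S"
proof -
  define Y where "Y = (S \<rightarrow>\<^sub>E (UNIV :: bit set))"
  define W where "W = {y \<in> Y. \<forall>v\<in>V. inner_on S y v = 0}"
  have finY: "finite Y" and cardY: "card Y = 2 ^ card S"
    using fin by (simp_all add: Y_def finite_PiE card_PiE card_UNIV_bit)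
  have finV: "finite V"
    using finY V finite_subset unfolding Y_def by blast
  have "W \<subseteq> Y"
    by (auto simp: W_def)
  have "2 * (\<Sum>y\<in>Y. card {v\<in>V. inner_on S y v = 0}) = (\<Sum>y\<in>Y. card V + (if y \<in> W then card V else 0))"
    unfolding sum_distrib_left
    by (intro sum.cong refl) (simp add: double_card_orthogonal_in_subgroup[OF finV V add_closed] W_def)
  also have "\<dots> = card Y * card V + card W * card V"
    using finY \<open>W \<subseteq> Y\<close> by (simp add: sum.distrib sum.If_cases Int_absorb1)
  finally have by_y: "2 * (\<Sum>y\<in>Y. card {v\<in>V. inner_on S y v = 0}) = card Y * card V + card W * card V" .
  have "2 * (\<Sum>v\<in>V. card {y\<in>Y. inner_on S y v = 0}) = (\<Sum>v\<in>V. card Y + (if v = restrict (\<lambda>_. 0) S then card Y else 0))"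
    unfolding sum_distrib_left Y_def using V
    by (intro sum.cong refl) (simp add: double_card_orthogonal[OF fin] subsetD)
  also have "\<dots> = card V * card Y + card Y"
    using finV zero by (simp add: sum.distrib)
  finally have by_v: "2 * (\<Sum>v\<in>V. card {y\<in>Y. inner_on S y v = 0}) = card V * card Y + card Y" .
  have "(\<Sum>y\<in>Y. card {v\<in>V. inner_on S y v = 0}) = (\<Sum>v\<in>V. card {y\<in>Y. inner_on S y v = 0})"
    using sum.swap_restrict[OF finY finV, of "\<lambda>_ _. 1::nat" "\<lambda>y v. inner_on S y v = 0"] by simp
  with by_y by_v have "card W * card V = card Y"
    by (simp add: mult.commute)
  then show ?thesis
    unfolding cardY by (simp add: W_def Y_def mult.commute)
qed

definition mat_vec :: "nat \<Rightarrow> (nat \<Rightarrow> nat \<Rightarrow> bit) \<Rightarrow> (nat \<Rightarrow> bit) \<Rightarrow> nat \<Rightarrow> bit" where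
  "mat_vec l G d = (\<lambda>i. \<Sum>j<l. G i j * d j)"

definition submatrix_image :: "nat \<Rightarrow> (nat \<Rightarrow> nat \<Rightarrow> bit) \<Rightarrow> nat set \<Rightarrow> (nat \<Rightarrow> bit) set" where
  "submatrix_image l G S = (\<lambda>d. restrict (mat_vec l G d) S) ` bvecs l"

definition supp :: "nat \<Rightarrow> (nat \<Rightarrow> bit) \<Rightarrow> nat set" where
  "supp n x = {i. i < n \<and> x i \<noteq> 0}"

definition dual_code_within :: "nat \<Rightarrow> nat \<Rightarrow> (nat \<Rightarrow> nat \<Rightarrow> bit) \<Rightarrow> nat set \<Rightarrow> (nat \<Rightarrow> bit) set" where
  "dual_code_within n l G S = {x \<in> dual_code n l G. supp n x \<subseteq> S}"

lemma submatrix_image_subset_PiE: "submatrix_image l G S \<subseteq> S \<rightarrow>\<^sub>E UNIV"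
  by (auto simp: submatrix_image_def)

lemma zero_in_submatrix_image: "restrict (\<lambda>_. 0) S \<in> submatrix_image l G S"
proof -
  have "restrict (mat_vec l G (restrict (\<lambda>_. 0) {..<l})) S = restrict (\<lambda>_. 0) S"
    by (auto simp: mat_vec_def fun_eq_iff)
  moreover have "restrict (\<lambda>_. 0) {..<l} \<in> bvecs l"
    by (simp add: bvecs_def)
  ultimately show ?thesis
    unfolding submatrix_image_def by (metis image_eqI)
qed

lemma vec_add_in_submatrix_image:
  assumes "a \<in> submatrix_image l G S" "b \<in> submatrix_image l G S"
  shows "vec_add S a b \<in> submatrix_image l G S"
proof -
  obtain d d' where d: "d \<in> bvecs l" "a = restrict (mat_vec l G d) S"
    and d': "d' \<in> bvecs l" "b = restrict (mat_vec l G d') S"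
    using assms unfolding submatrix_image_def by auto
  define e where "e = restrict (\<lambda>j. d j + d' j) {..<l}"
  have "vec_add S a b = restrict (mat_vec l G e) S"
    unfolding d d' vec_add_def mat_vec_def e_def
    by (simp add: fun_eq_iff distrib_left sum.distrib del: add_bit_eq_xor mult_bit_eq_and)
  moreover have "e \<in> bvecs l"
    by (simp add: e_def bvecs_def)
  ultimately show ?thesis
    unfolding submatrix_image_def by (metis image_eqI)
qed

lemma inner_on_mat_vec:
  "inner_on S y (restrict (mat_vec l G d) S) = (\<Sum>j<l. d j * (\<Sum>i\<in>S. G i j * y i))"
proof -
  have "inner_on S y (restrict (mat_vec l G d) S) = (\<Sum>i\<in>S. \<Sum>j<l. y i * (G i j * d j))"
    unfolding inner_on_def mat_vec_def
    by (rule sum.cong) (simp_all add: sum_distrib_left del: add_bit_eq_xor mult_bit_eq_and)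
  also have "\<dots> = (\<Sum>j<l. \<Sum>i\<in>S. y i * (G i j * d j))"
    by (rule sum.swap)
  also have "\<dots> = (\<Sum>j<l. d j * (\<Sum>i\<in>S. G i j * y i))"
    by (simp add: sum_distrib_left ac_simps del: add_bit_eq_xor mult_bit_eq_and)
  finally show ?thesis .
qed

lemma orthogonal_submatrix_image_iff:
  "(\<forall>v\<in>submatrix_image l G S. inner_on S y v = 0) \<longleftrightarrow> (\<forall>j<l. (\<Sum>i\<in>S. G i j * y i) = 0)"
proof
  assume orth: "\<forall>v\<in>submatrix_image l G S. inner_on S y v = 0"
  show "\<forall>j<l. (\<Sum>i\<in>S. G i j * y i) = 0"
  proof (intro allI impI)
    fix j assume "j < l"
    define d where "d = restrict (\<lambda>j'. if j' = j then 1 else 0 :: bit) {..<l}"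
    have "d \<in> bvecs l"
      by (simp add: d_def bvecs_def)
    then have "0 = inner_on S y (restrict (mat_vec l G d) S)"
      using orth by (simp add: submatrix_image_def)
    also have "\<dots> = inner_on {..<l} d (\<lambda>j'. \<Sum>i\<in>S. G i j' * y i)"
      unfolding inner_on_mat_vec by (simp only: inner_on_def)
    also have "\<dots> = (\<Sum>i\<in>S. G i j * y i)"
      using \<open>j < l\<close> unfolding d_def by (simp add: inner_on_unit_vector)
    finally show "(\<Sum>i\<in>S. G i j * y i) = 0" by simp
  qed
qed (auto simp: submatrix_image_def inner_on_mat_vec)

lemma sum_lessThan_eq_sum_if_supp_subset:
  assumes "S \<subseteq> {..<n}" "supp n x \<subseteq> S"
  shows "(\<Sum>i<n. G i j * x i) = (\<Sum>i\<in>S. G i j * x i)"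
  by (rule sum.mono_neutral_right) (use assms in \<open>auto simp: supp_def\<close>)

lemma bij_betw_dual_code_within_orthogonal:
  assumes S: "S \<subseteq> {..<n}"
  shows "bij_betw (\<lambda>x. restrict x S) (dual_code_within n l G S)
           {y \<in> S \<rightarrow>\<^sub>E UNIV. \<forall>v\<in>submatrix_image l G S. inner_on S y v = 0}"
proof (rule bij_betw_byWitness[where f' = "\<lambda>y. restrict (\<lambda>i. if i \<in> S then y i else 0) {..<n}"])
  show "\<forall>x\<in>dual_code_within n l G S. restrict (\<lambda>i. if i \<in> S then restrict x S i else 0) {..<n} = x"
    using S by (auto simp: dual_code_within_def dual_code_def bvecs_def supp_def fun_eq_iff PiE_def extensional_def)
  show "\<forall>y\<in>{y \<in> S \<rightarrow>\<^sub>E UNIV. \<forall>v\<in>submatrix_image l G S. inner_on S y v = 0}.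
          restrict (restrict (\<lambda>i. if i \<in> S then y i else 0) {..<n}) S = y"
    using S by (auto simp: fun_eq_iff PiE_def extensional_def)
  show "(\<lambda>x. restrict x S) ` dual_code_within n l G S
          \<subseteq> {y \<in> S \<rightarrow>\<^sub>E UNIV. \<forall>v\<in>submatrix_image l G S. inner_on S y v = 0}"
  proof (rule image_subsetI)
    fix x assume x: "x \<in> dual_code_within n l G S"
    have "(\<Sum>i\<in>S. G i j * restrict x S i) = 0" if "j < l" for j
      using x that sum_lessThan_eq_sum_if_supp_subset[OF S, of x G j]
      by (simp add: dual_code_within_def dual_code_def)
    then show "restrict x S \<in> {y \<in> S \<rightarrow>\<^sub>E UNIV. \<forall>v\<in>submatrix_image l G S. inner_on S y v = 0}"
      by (simp add: orthogonal_submatrix_image_iff)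
  qed
  show "(\<lambda>y. restrict (\<lambda>i. if i \<in> S then y i else 0) {..<n}) `
          {y \<in> S \<rightarrow>\<^sub>E UNIV. \<forall>v\<in>submatrix_image l G S. inner_on S y v = 0} \<subseteq> dual_code_within n l G S"
  proof (rule image_subsetI, clarify)
    fix y assume "y \<in> S \<rightarrow>\<^sub>E UNIV" and orth: "\<forall>v\<in>submatrix_image l G S. inner_on S y v = 0"
    define x where "x = restrict (\<lambda>i. if i \<in> S then y i else 0) {..<n}"
    have supp_x: "supp n x \<subseteq> S"
      by (auto simp: supp_def x_def)
    have "(\<Sum>i<n. G i j * x i) = 0" if "j < l" for j
    proof -
      have "(\<Sum>i<n. G i j * x i) = (\<Sum>i\<in>S. G i j * y i)"
        unfolding sum_lessThan_eq_sum_if_supp_subset[OF S supp_x] using S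
        by (intro sum.cong) (auto simp: x_def)
      also have "\<dots> = 0"
        using orth that by (simp add: orthogonal_submatrix_image_iff)
      finally show ?thesis .
    qed
    moreover have "x \<in> bvecs n"
      by (simp add: x_def bvecs_def)
    ultimately show "x \<in> dual_code_within n l G S"
      using supp_x by (simp add: dual_code_within_def dual_code_def)
  qed
qed

lemma card_submatrix_image_mult_card_dual_code_within:
  assumes "S \<subseteq> {..<n}"
  shows "card (submatrix_image l G S) * card (dual_code_within n l G S) = 2 ^ card S"
proof -
  have "finite S"
    using assms finite_subset by blast
  then show ?thesis
    using card_mult_card_orthogonal[OF _ submatrix_image_subset_PiE vec_add_in_submatrix_image
        zero_in_submatrix_image]
      bij_betw_same_card[OF bij_betw_dual_code_within_orthogonal[OF assms]]
    by simp
qed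

definition zero_vec :: "nat \<Rightarrow> nat \<Rightarrow> bit" where
  "zero_vec n = restrict (\<lambda>_. 0) {..<n}"

lemma supp_zero_vec [simp]: "supp n (zero_vec n) = {}"
  by (simp add: supp_def zero_vec_def)

lemma supp_eq_empty_iff: "x \<in> bvecs n \<Longrightarrow> supp n x = {} \<longleftrightarrow> x = zero_vec n"
  by (auto simp: supp_def zero_vec_def bvecs_def fun_eq_iff PiE_def extensional_def)

lemma finite_dual_code: "finite (dual_code n l G)"
  by (rule finite_subset[of _ "bvecs n"]) (auto simp: dual_code_def bvecs_def finite_PiE)

lemma zero_vec_in_dual_code_within: "zero_vec n \<in> dual_code_within n l G S"
  by (auto simp: dual_code_within_def dual_code_def zero_vec_def bvecs_def supp_def intro!: sum.neutral
      simp del: add_bit_eq_xor mult_bit_eq_and)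

lemma finite_dual_code_within: "finite (dual_code_within n l G S)"
  using finite_dual_code by (rule finite_subset[rotated]) (auto simp: dual_code_within_def)

lemma card_dual_code_within_pos: "0 < card (dual_code_within n l G S)"
  using finite_dual_code_within[of n l G S] zero_vec_in_dual_code_within[of n l G S]
  by (auto simp: card_gt_0_iff)

lemma encodable_iff:
  "encodable l k G0 G1 m S s \<longleftrightarrow>
     vec_add S (restrict (mat_vec k G1 m) S) s \<in> submatrix_image l G0 S"
proof -
  have "restrict (\<lambda>i. restrict (mat_vec k G1 m) S i + s i) S = restrict (mat_vec l G0 d) S
          \<longleftrightarrow> (\<forall>i\<in>S. mat_vec l G0 d i = mat_vec k G1 m i + s i)" for d
    by (auto simp: fun_eq_iff simp del: add_bit_eq_xor mult_bit_eq_and)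
  then show ?thesis
    by (simp add: encodable_def submatrix_image_def vec_add_def image_iff mat_vec_def
        del: add_bit_eq_xor mult_bit_eq_and)
qed

lemma card_not_encodable:
  assumes "finite S"
  shows "card {s \<in> S \<rightarrow>\<^sub>E UNIV. \<not> encodable l k G0 G1 m S s} = 2 ^ card S - card (submatrix_image l G0 S)"
proof -
  define c where "c = restrict (mat_vec k G1 m) S"
  define good where "good = {s \<in> S \<rightarrow>\<^sub>E UNIV. vec_add S c s \<in> submatrix_image l G0 S}"
  have "bij_betw (vec_add S c) good (submatrix_image l G0 S)"
    using vec_add_vec_add_cancel[OF subsetD[OF submatrix_image_subset_PiE]]
    by (intro bij_betw_byWitness[where f' = "vec_add S c"])
      (auto simp: good_def vec_add_PiE vec_add_vec_add_cancel, simp add: vec_add_def)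
  then have "card good = card (submatrix_image l G0 S)"
    by (rule bij_betw_same_card)
  moreover have "{s \<in> S \<rightarrow>\<^sub>E UNIV. \<not> encodable l k G0 G1 m S s} = (S \<rightarrow>\<^sub>E UNIV) - good"
    by (auto simp: good_def encodable_iff c_def)
  moreover have "card (S \<rightarrow>\<^sub>E (UNIV :: bit set)) = 2 ^ card S"
    using assms by (simp add: card_PiE card_UNIV_bit)
  ultimately show ?thesis
    using assms by (simp add: card_Diff_subset good_def finite_PiE)
qed

lemma real_card_not_encodable:
  assumes "S \<subseteq> {..<n}"
  shows "real (card {s \<in> S \<rightarrow>\<^sub>E UNIV. \<not> encodable l k G0 G1 m S s})
           = 2 ^ card S * (1 - 1 / real (card (dual_code_within n l G0 S)))"
proof -
  let ?V = "card (submatrix_image l G0 S)" and ?D = "card (dual_code_within n l G0 S)"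
  have "finite S"
    using assms finite_subset by blast
  have prod: "?V * ?D = 2 ^ card S"
    by (rule card_submatrix_image_mult_card_dual_code_within[OF assms])
  moreover have "0 < ?D"
    by (rule card_dual_code_within_pos)
  ultimately have "?V \<le> 2 ^ card S"
    by (metis dvd_imp_le dvd_triv_left zero_less_numeral zero_less_power)
  then have "real (card {s \<in> S \<rightarrow>\<^sub>E UNIV. \<not> encodable l k G0 G1 m S s}) = 2 ^ card S - real ?V"
    using card_not_encodable[OF \<open>finite S\<close>] by (simp add: of_nat_diff)
  also have "real ?V = 2 ^ card S / real ?D"
    using prod \<open>0 < ?D\<close> by (simp add: eq_divide_eq flip: of_nat_mult)
  finally show ?thesis
    by (simp add: right_diff_distrib)
qed

lemma fail_prob_eq_average:
  assumes "u \<le> n"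
  shows "fail_prob n l k G0 G1 m u =
    (\<Sum>S | S \<subseteq> {..<n} \<and> card S = u. 1 - 1 / real (card (dual_code_within n l G0 S))) / real (n choose u)"
proof -
  define Sets where "Sets = {S. S \<subseteq> {..<n} \<and> card S = u}"
  define Y where "Y S = (S \<rightarrow>\<^sub>E (UNIV :: bit set))" for S :: "nat set"
  define Bad where "Bad S = {s \<in> Y S. \<not> encodable l k G0 G1 m S s}" for S
  have finSets: "finite Sets"
    by (rule finite_subset[of _ "Pow {..<n}"]) (auto simp: Sets_def)
  have cardSets: "card Sets = n choose u"
    unfolding Sets_def using n_subsets[of "{..<n}" u] by simp
  have finS: "finite S" if "S \<in> Sets" for S
    using that finite_subset by (auto simp: Sets_def)
  have finY: "finite (Y S)" and cardY: "card (Y S) = 2 ^ u" if "S \<in> Sets" for S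
    using finS[OF that] that by (simp_all add: Y_def finite_PiE card_PiE card_UNIV_bit Sets_def)
  have space: "defect_space n u = Sigma Sets Y"
    by (auto simp: defect_space_def Sets_def Y_def)
  have fin_space: "finite (defect_space n u)"
    unfolding space using finSets finY by (rule finite_SigmaI)
  have "Sets \<noteq> {}"
    using cardSets assms by auto
  then obtain S0 where "S0 \<in> Sets"
    by blast
  then have "(S0, restrict (\<lambda>_. 0) S0) \<in> defect_space n u"
    by (simp add: space Y_def)
  then have "defect_space n u \<noteq> {}"
    by blast
  moreover have "defect_space n u \<inter> {(S, s). \<not> encodable l k G0 G1 m S s} = Sigma Sets Bad"
    by (auto simp: space Bad_def)
  ultimately have "fail_prob n l k G0 G1 m u = card (Sigma Sets Bad) / card (Sigma Sets Y)"
    unfolding fail_prob_def using fin_space by (simp add: measure_pmf_of_set space)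
  also have "card (Sigma Sets Bad) = (\<Sum>S\<in>Sets. card (Bad S))"
    using finSets finY by (intro card_SigmaI) (auto simp: Bad_def)
  also have "card (Sigma Sets Y) = card Sets * 2 ^ u"
    using finSets finY by (simp add: card_SigmaI cardY)
  also have "real (\<Sum>S\<in>Sets. card (Bad S)) = (\<Sum>S\<in>Sets. 2 ^ u * (1 - 1 / real (card (dual_code_within n l G0 S))))"
    unfolding of_nat_sum
    by (rule sum.cong) (auto simp: Bad_def Y_def Sets_def real_card_not_encodable)
  finally show ?thesis
    unfolding Sets_def[symmetric] by (simp add: cardSets sum_distrib_left[symmetric])
qed

lemma hweight_eq_card_supp: "hweight n x = card (supp n x)"
  by (simp add: hweight_def supp_def)

lemma supp_subset: "supp n x \<subseteq> {..<n}"
  by (auto simp: supp_def)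

lemma finite_supp: "finite (supp n x)"
  by (simp add: supp_def)

lemma dmin_le_hweight:
  assumes "x \<in> dual_code n l G" "supp n x \<noteq> {}"
  shows "dmin n l G \<le> hweight n x"
proof -
  have "finite {hweight n x | x. x \<in> dual_code n l G \<and> (\<exists>i<n. x i \<noteq> 0)}"
    using finite_imageI[OF finite_dual_code, of "hweight n"] by (rule finite_subset[rotated]) auto
  then show ?thesis
    unfolding dmin_def by (rule Min_le) (use assms in \<open>auto simp: supp_def\<close>)
qed

lemma dmin_pos:
  assumes "\<exists>x \<in> dual_code n l G. \<exists>i<n. x i \<noteq> 0"
  shows "0 < dmin n l G"
proof -
  let ?M = "{hweight n x | x. x \<in> dual_code n l G \<and> (\<exists>i<n. x i \<noteq> 0)}"
  have "finite ?M"
    using finite_imageI[OF finite_dual_code, of "hweight n"] by (rule finite_subset[rotated]) auto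
  moreover have "?M \<noteq> {}"
    using assms by auto
  ultimately have "dmin n l G \<in> ?M"
    unfolding dmin_def by (rule Min_in)
  then show ?thesis
    by (auto simp: hweight_eq_card_supp card_gt_0_iff finite_supp supp_def)
qed

lemma vec_add_in_dual_code:
  assumes "x \<in> dual_code n l G" "y \<in> dual_code n l G"
  shows "vec_add {..<n} x y \<in> dual_code n l G"
proof -
  have "(\<Sum>i<n. G i j * vec_add {..<n} x y i) = (\<Sum>i<n. G i j * x i) + (\<Sum>i<n. G i j * y i)" for j
    by (simp add: vec_add_def distrib_left sum.distrib del: add_bit_eq_xor mult_bit_eq_and)
  then show ?thesis
    using assms by (simp add: dual_code_def bvecs_def vec_add_PiE)
qed

lemma supp_vec_add: "supp n (vec_add {..<n} x y) = (supp n x \<union> supp n y) - (supp n x \<inter> supp n y)"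
  by (auto simp: supp_def vec_add_def)

lemma bvecs_eq_if_supp_eq:
  assumes "x \<in> bvecs n" "y \<in> bvecs n" "supp n x = supp n y"
  shows "x = y"
proof
  fix i
  show "x i = y i"
  proof (cases "i < n")
    case True
    then have "x i = 1 \<longleftrightarrow> y i = 1"
      using assms(3) by (auto simp: supp_def set_eq_iff)
    then show ?thesis
      by (cases "x i"; cases "y i") simp_all
  next
    case False
    then show ?thesis
      using assms(1,2) by (simp add: bvecs_def PiE_def extensional_def)
  qed
qed

lemma card_supps_vec_add_eq_double_card_Un:
  "card (supp n x) + card (supp n y) + card (supp n (vec_add {..<n} x y)) = 2 * card (supp n x \<union> supp n y)"
proof -
  let ?A = "supp n x" and ?B = "supp n y"
  have "card (supp n (vec_add {..<n} x y)) = card (?A \<union> ?B) - card (?A \<inter> ?B)"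
    by (simp add: supp_vec_add card_Diff_subset finite_supp Int_lower1 le_supI1)
  moreover have "card ?A + card ?B = card (?A \<union> ?B) + card (?A \<inter> ?B)"
    by (rule card_Un_Int) (simp_all add: finite_supp)
  moreover have "card (?A \<inter> ?B) \<le> card (?A \<union> ?B)"
    by (rule card_mono) (auto simp: finite_supp)
  ultimately show ?thesis
    by linarith
qed

lemma dual_code_within_eq_zero:
  assumes "finite S" "card S < dmin n l G"
  shows "dual_code_within n l G S = {zero_vec n}"
proof (rule ccontr)
  assume "dual_code_within n l G S \<noteq> {zero_vec n}"
  then obtain x where x: "x \<in> dual_code_within n l G S" "x \<noteq> zero_vec n"
    using zero_vec_in_dual_code_within by blast
  then have "supp n x \<noteq> {}"
    by (simp add: supp_eq_empty_iff dual_code_within_def dual_code_def)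
  then have "dmin n l G \<le> card (supp n x)"
    using x dmin_le_hweight by (auto simp: dual_code_within_def hweight_eq_card_supp)
  also have "\<dots> \<le> card S"
    using x assms(1) by (auto simp: dual_code_within_def intro: card_mono)
  finally show False
    using assms(2) by simp
qed

lemma card_dual_code_within_le_2:
  assumes "finite S" "2 * card S < 3 * dmin n l G"
  shows "card (dual_code_within n l G S) \<le> 2"
proof -
  let ?D = "dual_code_within n l G S - {zero_vec n}"
  have "x = y" if x: "x \<in> ?D" and y: "y \<in> ?D" for x y
  proof (rule ccontr)
    assume "x \<noteq> y"
    let ?z = "vec_add {..<n} x y"
    have codewords: "x \<in> dual_code n l G" "y \<in> dual_code n l G" "?z \<in> dual_code n l G"
      using x y vec_add_in_dual_code by (auto simp: dual_code_within_def)
    then have "supp n x \<noteq> {}" "supp n y \<noteq> {}" "supp n ?z \<noteq> {}"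
      using x y \<open>x \<noteq> y\<close> bvecs_eq_if_supp_eq[of x n y]
      by (auto simp: supp_eq_empty_iff supp_vec_add dual_code_def)
    then have "dmin n l G \<le> card (supp n x)" "dmin n l G \<le> card (supp n y)"
      "dmin n l G \<le> card (supp n ?z)"
      using codewords by (simp_all add: dmin_le_hweight flip: hweight_eq_card_supp)
    then have "3 * dmin n l G \<le> card (supp n x) + card (supp n y) + card (supp n ?z)"
      by linarith
    also have "\<dots> = 2 * card (supp n x \<union> supp n y)"
      by (rule card_supps_vec_add_eq_double_card_Un)
    also have "\<dots> \<le> 2 * card S"
      using x y assms(1) by (auto simp: dual_code_within_def intro: card_mono)
    finally show False
      using assms(2) by simp
  qed
  then have "card ?D \<le> 1"
    using finite_dual_code_within by (simp add: card_le_Suc0_iff_eq)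
  then show ?thesis
    using finite_dual_code_within zero_vec_in_dual_code_within by (simp add: card_Diff_singleton)
qed

lemma card_supersets:
  assumes T: "T \<subseteq> {..<n}" and "card T \<le> u"
  shows "card {S. S \<subseteq> {..<n} \<and> card S = u \<and> T \<subseteq> S} = (n - card T) choose (u - card T)"
proof -
  have "finite T"
    using T finite_subset by blast
  have "bij_betw (\<lambda>S. S - T) {S. S \<subseteq> {..<n} \<and> card S = u \<and> T \<subseteq> S}
          {R. R \<subseteq> {..<n} - T \<and> card R = u - card T}"
  proof (rule bij_betw_byWitness[where f' = "\<lambda>R. R \<union> T"])
    show "(\<lambda>S. S - T) ` {S. S \<subseteq> {..<n} \<and> card S = u \<and> T \<subseteq> S}
            \<subseteq> {R. R \<subseteq> {..<n} - T \<and> card R = u - card T}"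
      using \<open>finite T\<close> by (auto simp: card_Diff_subset)
    show "(\<lambda>R. R \<union> T) ` {R. R \<subseteq> {..<n} - T \<and> card R = u - card T}
            \<subseteq> {S. S \<subseteq> {..<n} \<and> card S = u \<and> T \<subseteq> S}"
    proof (rule image_subsetI)
      fix R assume "R \<in> {R. R \<subseteq> {..<n} - T \<and> card R = u - card T}"
      then have R: "R \<subseteq> {..<n} - T" "card R = u - card T"
        by auto
      then have "finite R"
        using finite_subset by blast
      with R \<open>finite T\<close> have "card (R \<union> T) = card R + card T"
        by (intro card_Un_disjoint) auto
      then show "R \<union> T \<in> {S. S \<subseteq> {..<n} \<and> card S = u \<and> T \<subseteq> S}"
        using R T assms(2) by auto
    qed
  qed auto
  then have "card {S. S \<subseteq> {..<n} \<and> card S = u \<and> T \<subseteq> S} = card ({..<n} - T) choose (u - card T)"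
    by (simp add: bij_betw_same_card n_subsets)
  then show ?thesis
    using \<open>finite T\<close> T by (simp add: card_Diff_subset)
qed

lemma card_supersets_supp:
  "card {S. S \<subseteq> {..<n} \<and> card S = u \<and> supp n x \<subseteq> S}
     = (if hweight n x \<le> u then (n - hweight n x) choose (u - hweight n x) else 0)"
proof (cases "hweight n x \<le> u")
  case True
  then show ?thesis
    by (simp add: card_supersets[OF supp_subset] hweight_eq_card_supp)
next
  case False
  have "hweight n x \<le> card S" if "S \<subseteq> {..<n}" "supp n x \<subseteq> S" for S
    unfolding hweight_eq_card_supp using that by (meson card_mono finite_lessThan finite_subset)
  with False have "{S. S \<subseteq> {..<n} \<and> card S = u \<and> supp n x \<subseteq> S} = {}"
    by force
  with False show ?thesis
    by (simp only: card.empty if_False)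
qed

lemma card_dual_code_within_minus_1:
  "card (dual_code_within n l G S) - 1 = card {x \<in> dual_code n l G. supp n x \<noteq> {} \<and> supp n x \<subseteq> S}"
proof -
  have "{x \<in> dual_code n l G. supp n x \<noteq> {} \<and> supp n x \<subseteq> S} = dual_code_within n l G S - {zero_vec n}"
    by (auto simp: dual_code_within_def dual_code_def supp_eq_empty_iff)
  then show ?thesis
    using finite_dual_code_within zero_vec_in_dual_code_within by (simp add: card_Diff_singleton)
qed

lemma sum_card_dual_code_within:
  assumes "0 < dmin n l G"
  shows "(\<Sum>S | S \<subseteq> {..<n} \<and> card S = u. card (dual_code_within n l G S) - 1)
       = (\<Sum>w = dmin n l G..u. Bw n l G w * ((n - w) choose (u - w)))"
proof -
  define Sets where "Sets = {S. S \<subseteq> {..<n} \<and> card S = u}"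
  define ND where "ND = {x \<in> dual_code n l G. supp n x \<noteq> {}}"
  define f where "f w = (n - w) choose (u - w)" for w
  have finSets: "finite Sets"
    by (rule finite_subset[of _ "Pow {..<n}"]) (auto simp: Sets_def)
  have finND: "finite ND"
    using finite_dual_code by (rule finite_subset[rotated]) (auto simp: ND_def)
  have weight_class: "{x\<in>{x\<in>ND. hweight n x \<le> u}. hweight n x = w} = {x \<in> dual_code n l G. hweight n x = w}"
    if "w \<in> {dmin n l G..u}" for w
    using that assms by (auto simp: ND_def hweight_eq_card_supp)
  have "(\<Sum>S\<in>Sets. card (dual_code_within n l G S) - 1) = (\<Sum>S\<in>Sets. card {x\<in>ND. supp n x \<subseteq> S})"
    unfolding card_dual_code_within_minus_1 by (simp add: ND_def conj_assoc)
  also have "\<dots> = (\<Sum>x\<in>ND. card {S\<in>Sets. supp n x \<subseteq> S})"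
    using sum.swap_restrict[OF finSets finND, of "\<lambda>_ _. 1::nat" "\<lambda>S x. supp n x \<subseteq> S"] by simp
  also have "\<dots> = (\<Sum>x\<in>{x\<in>ND. hweight n x \<le> u}. f (hweight n x))"
    using card_supersets_supp[of n u] by (simp add: Sets_def f_def conj_assoc sum.inter_filter[OF finND])
  also have "\<dots> = (\<Sum>w = dmin n l G..u. \<Sum>x\<in>{x\<in>{x\<in>ND. hweight n x \<le> u}. hweight n x = w}. f (hweight n x))"
  proof (rule sum.group[symmetric])
    show "finite {x\<in>ND. hweight n x \<le> u}"
      using finND by simp
    show "hweight n ` {x\<in>ND. hweight n x \<le> u} \<subseteq> {dmin n l G..u}"
      using dmin_le_hweight[of _ n l G] by (force simp: ND_def)
  qed simp
  also have "\<dots> = (\<Sum>w = dmin n l G..u. Bw n l G w * f w)"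
  proof (rule sum.cong[OF refl])
    fix w assume "w \<in> {dmin n l G..u}"
    then show "(\<Sum>x\<in>{x\<in>{x\<in>ND. hweight n x \<le> u}. hweight n x = w}. f (hweight n x)) = Bw n l G w * f w"
      unfolding weight_class[OF \<open>w \<in> {dmin n l G..u}\<close>] by (simp add: Bw_def)
  qed
  finally show ?thesis
    by (simp add: Sets_def f_def)
qed

lemma one_minus_inverse_eq_half: "0 < c \<Longrightarrow> c \<le> 2 \<Longrightarrow> 1 - 1 / real c = real (c - 1) / 2"
  by (cases "c = 1") (auto simp: numeral_2_eq_2 le_Suc_eq)

lemma one_minus_inverse_le:
  assumes "0 < c"
  shows "1 - 1 / real c \<le> real (c - 1)"
proof (cases "c = 1")
  case False
  with assms have "1 \<le> real (c - 1)"
    by simp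
  moreover have "1 - 1 / real c \<le> 1"
    by simp
  ultimately show ?thesis
    by linarith
qed simp

lemma real_sum_card_dual_code_within:
  assumes "0 < dmin n l G"
  shows "(\<Sum>S | S \<subseteq> {..<n} \<and> card S = u. real (card (dual_code_within n l G S) - 1))
       = (\<Sum>w = dmin n l G..u. real (Bw n l G w) * real ((n - w) choose (u - w)))"
  using arg_cong[OF sum_card_dual_code_within[OF assms, of u], of real] by simp

lemma fail_prob_eq_0:
  assumes "u \<le> n" "u < dmin n l G0"
  shows "fail_prob n l k G0 G1 m u = 0"
proof -
  have "card (dual_code_within n l G0 S) = 1" if "S \<subseteq> {..<n}" "card S = u" for S
  proof -
    have "finite S"
      using that(1) finite_subset by blast
    with that(2) assms(2) show ?thesis
      by (simp add: dual_code_within_eq_zero)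
  qed
  then show ?thesis
    by (simp add: fail_prob_eq_average[OF assms(1)])
qed

lemma fail_prob_eq_half_weight_sum:
  assumes "u \<le> n" "0 < dmin n l G0" "2 * u < 3 * dmin n l G0"
  shows "fail_prob n l k G0 G1 m u =
    1/2 * ((\<Sum>w = dmin n l G0..u. real (Bw n l G0 w) * real ((n - w) choose (u - w))) / real (n choose u))"
proof -
  have pointwise: "1 - 1 / real (card (dual_code_within n l G0 S)) = real (card (dual_code_within n l G0 S) - 1) / 2"
    if "S \<subseteq> {..<n}" "card S = u" for S
  proof -
    have "finite S"
      using that(1) finite_subset by blast
    with that(2) assms(3) have "card (dual_code_within n l G0 S) \<le> 2"
      by (simp add: card_dual_code_within_le_2)
    then show ?thesis
      by (simp add: one_minus_inverse_eq_half card_dual_code_within_pos)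
  qed
  have average: "(\<Sum>S | S \<subseteq> {..<n} \<and> card S = u. 1 - 1 / real (card (dual_code_within n l G0 S)))
      = (\<Sum>S | S \<subseteq> {..<n} \<and> card S = u. real (card (dual_code_within n l G0 S) - 1)) / 2"
    unfolding sum_divide_distrib by (rule sum.cong) (simp_all add: pointwise)
  show ?thesis
    unfolding fail_prob_eq_average[OF assms(1)] real_sum_card_dual_code_within[OF assms(2), symmetric] average
    by simp
qed

lemma fail_prob_le_weight_sum:
  assumes "u \<le> n" "0 < dmin n l G0"
  shows "fail_prob n l k G0 G1 m u \<le>
    (\<Sum>w = dmin n l G0..u. real (Bw n l G0 w) * real ((n - w) choose (u - w))) / real (n choose u)"
  unfolding fail_prob_eq_average[OF assms(1)] real_sum_card_dual_code_within[OF assms(2), symmetric]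
  by (intro divide_right_mono sum_mono one_minus_inverse_le card_dual_code_within_pos) simp

theorem theorem2:
  fixes n l k u :: nat and G0 G1 :: "nat \<Rightarrow> nat \<Rightarrow> bit" and m :: "nat \<Rightarrow> bit"
  assumes "\<exists>x \<in> dual_code n l G0. \<exists>i<n. x i \<noteq> 0"
    and "1 \<le> u" and "u \<le> n"
  defines "d0 \<equiv> dmin n l G0"
  defines "t0 \<equiv> (d0 - 1) div 2"
  defines "S \<equiv> (\<Sum>w=d0..u. real (Bw n l G0 w) * real ((n - w) choose (u - w))) / real (n choose u)"
  shows "(u < d0 \<longrightarrow> fail_prob n l k G0 G1 m u = 0)
       \<and> (d0 \<le> u \<and> u \<le> d0 + t0 \<longrightarrow> fail_prob n l k G0 G1 m u = 1/2 * S)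
       \<and> (d0 + t0 < u \<longrightarrow> fail_prob n l k G0 G1 m u \<le> min S 1)"
proof -
  have d0_pos: "0 < d0"
    unfolding d0_def by (rule dmin_pos[OF assms(1)])
  have "u \<le> d0 + t0 \<Longrightarrow> 2 * u < 3 * d0"
    using d0_pos unfolding t0_def by linarith
  moreover have "fail_prob n l k G0 G1 m u \<le> 1"
    unfolding fail_prob_def by (rule measure_pmf.prob_le_1)
  ultimately show ?thesis
    using assms(3) d0_pos fail_prob_eq_0 fail_prob_eq_half_weight_sum fail_prob_le_weight_sum
    unfolding S_def d0_def by simp
qed

end
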